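(* Let $\phi$ be a uniformly convex norm on $\mathbf{R}^n$ of class $\mathcal{C}^2$ on $\mathbf{R}^n\setminus\{0\}$, let $K\subseteq\mathbf{R}^n$ be closed, $x\in\mathbf{R}^n\setminus K$, and suppose $\delta^\phi_K$ is pointwise twice differentiable at $x$. Then $\rho^\phi_K(x)>1$. In particular $\mathrm{Cut}^\phi(K)\subseteq\Sigma^\phi_2(K)$.
   Context: A norm $\phi$ is uniformly convex if there is $\gamma>0$ such that $x\mapsto\phi(x)-\gamma|x|$ is convex. For closed $K$: $\delta^\phi_K(x)=\inf\{\phi(y-x):y\in K\}$; $\xi^\phi_K(x)=K\cap\{w:\phi(x-w)=\delta^\phi_K(x)\}$; $\rho^\phi_K(x)=\sup\bigl(\mathbf{R}\cap\{s:\delta^\phi_K(a+s(x-a))=s\,\delta^\phi_K(x)\}\bigr)$ for any $a\in\xi^\phi_K(x)$; $N^\phi(K)=\{(a,\eta):a\in K,\ \phi(\eta)=1,\ \delta^\phi_K(a+s\eta)=s\text{ for some }s>0\}$; $r^\phi_K(a,\eta)=\sup\{s>0:\delta^\phi_K(a+s\eta)=s\}$; $\mathrm{Cut}^\phi(K)=\{a+r^\phi_K(a,\eta)\eta:(a,\eta)\in N^\phi(K),\ r^\phi_K(a,\eta)<\infty\}$. A function is pointwise twice differentiable at $x$ if there are an open $U\ni x$ in its domain and a polynomial $P$ of degree $\le2$ with $f(x)=P(x)$ and $|f(y)-P(y)|/|y-x|^2\to0$ as $y\to x$. $\Sigma^\phi_2(K)$ is the set of $x\in\mathbf{R}^n\setminus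 K$ where $\delta^\phi_K$ is not pointwise twice differentiable. *)

theory Defs
  imports "HOL-Analysis.Analysis"
begin

definition is_norm_fn :: "('a::euclidean_space \<Rightarrow> real) \<Rightarrow> bool" where
  "is_norm_fn \<phi> \<longleftrightarrow> (\<forall>x. \<phi> x \<ge> 0) \<and> (\<forall>x. \<phi> x = 0 \<longleftrightarrow> x = 0)
     \<and> (\<forall>x y. \<phi> (x + y) \<le> \<phi> x + \<phi> y) \<and> (\<forall>c x. \<phi> (c *\<^sub>R x) = \<bar>c\<bar> * \<phi> x)"

definition uniformly_convex_norm :: "('a::euclidean_space \<Rightarrow> real) \<Rightarrow> bool" where
  "uniformly_convex_norm \<phi> \<longleftrightarrow> (\<exists>\<gamma>>0. convex_on UNIV (\<lambda>x. \<phi> x - \<gamma> * norm x))"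

definition C2_off_origin :: "('a::euclidean_space \<Rightarrow> real) \<Rightarrow> bool" where
  "C2_off_origin \<phi> \<longleftrightarrow> (\<exists>(Df :: 'a \<Rightarrow> ('a \<Rightarrow>\<^sub>L real)) (D2 :: 'a \<Rightarrow> ('a \<Rightarrow>\<^sub>L ('a \<Rightarrow>\<^sub>L real))).
     (\<forall>x. x \<noteq> 0 \<longrightarrow> (\<phi> has_derivative blinfun_apply (Df x)) (at x)
                  \<and> (Df has_derivative blinfun_apply (D2 x)) (at x))
     \<and> continuous_on (UNIV - {0}) D2)"

definition dist_fn :: "('a::euclidean_space \<Rightarrow> real) \<Rightarrow> 'a set \<Rightarrow> 'a \<Rightarrow> real" where
  "dist_fn \<phi> K x = Inf {\<phi> (y - x) | y. y \<in> K}"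

definition xi_fn :: "('a::euclidean_space \<Rightarrow> real) \<Rightarrow> 'a set \<Rightarrow> 'a \<Rightarrow> 'a set" where
  "xi_fn \<phi> K x = K \<inter> {w. \<phi> (x - w) = dist_fn \<phi> K x}"

text \<open>Reach along the ray through a nearest point a (the paper notes independence of the choice of a).\<close>
definition rho_fn :: "('a::euclidean_space \<Rightarrow> real) \<Rightarrow> 'a set \<Rightarrow> 'a \<Rightarrow> ereal" where
  "rho_fn \<phi> K x = (let a = (SOME a. a \<in> xi_fn \<phi> K x) in
     Sup (ereal ` {s::real. dist_fn \<phi> K (a + s *\<^sub>R (x - a)) = s * dist_fn \<phi> K x}))"

definition normal_bundle :: "('a::euclidean_space \<Rightarrow> real) \<Rightarrow> 'a set \<Rightarrow> ('a \<times> 'a) set" where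
  "normal_bundle \<phi> K = {(a, \<eta>). a \<in> K \<and> \<phi> \<eta> = 1 \<and> (\<exists>s>0. dist_fn \<phi> K (a + s *\<^sub>R \<eta>) = s)}"

definition r_fn :: "('a::euclidean_space \<Rightarrow> real) \<Rightarrow> 'a set \<Rightarrow> 'a \<Rightarrow> 'a \<Rightarrow> ereal" where
  "r_fn \<phi> K a \<eta> = Sup (ereal ` {s::real. s > 0 \<and> dist_fn \<phi> K (a + s *\<^sub>R \<eta>) = s})"

definition cut_locus :: "('a::euclidean_space \<Rightarrow> real) \<Rightarrow> 'a set \<Rightarrow> 'a set" where
  "cut_locus \<phi> K = {a + real_of_ereal (r_fn \<phi> K a \<eta>) *\<^sub>R \<eta> | a \<eta>.
      (a, \<eta>) \<in> normal_bundle \<phi> K \<and> r_fn \<phi> K a \<eta> < \<infinity>}"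

text \<open>Pointwise twice differentiability of a function defined on all of the space
  (the open neighbourhood U can be taken to be the whole space); the polynomial of
  degree at most 2 is written as constant + linear + bilinear part centred at x.\<close>
definition ptwise_twice_diff :: "('a::euclidean_space \<Rightarrow> real) \<Rightarrow> 'a \<Rightarrow> bool" where
  "ptwise_twice_diff f x \<longleftrightarrow> (\<exists>(c::real) (L::'a \<Rightarrow> real) (Q::'a \<Rightarrow> 'a \<Rightarrow> real).
     linear L \<and> bilinear Q \<and> f x = c \<and>
     ((\<lambda>y. \<bar>f y - (c + L (y - x) + Q (y - x) (y - x))\<bar> / (norm (y - x))\<^sup>2) \<longlongrightarrow> 0) (at x))"

definition Sigma2 :: "('a::euclidean_space \<Rightarrow> real) \<Rightarrow> 'a set \<Rightarrow> 'a set" where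
  "Sigma2 \<phi> K = {x. x \<notin> K \<and> \<not> ptwise_twice_diff (dist_fn \<phi> K) x}"

end

theory Submission
  imports Defs
begin

(* Let a be a nearest point of K to x, v = x - a and d = dist x = phi v.  Pointwise twice
   differentiability gives a quadratic minorant d + L h - M |h|^2 of the distance near x, and since
   the distance is at most phi (. - a), also of phi near v.  For the convex function phi - gamma |.|
   such a local minorant is a global subgradient inequality.  If some p in K were closer than
   (1 + t) d to a + (1 + t) v, then s = (a - p) / (1 + t) satisfies phi (v + s) < d, and the two
   inequalities evaluated at s and at x - t s force both the component of s along v and the one
   orthogonal to v to be O(t |s|^2); for small t this gives s = 0, a contradiction.  So the segment
   from a through x stays distance-minimising a little beyond x, i.e. rho > 1, and a cut point,
   where minimality stops, cannot be a point of pointwise twice differentiability. *)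

lemma norm_fn_nonneg: "is_norm_fn \<phi> \<Longrightarrow> 0 \<le> \<phi> x"
  unfolding is_norm_fn_def by blast

lemma norm_fn_zero [simp]: "is_norm_fn \<phi> \<Longrightarrow> \<phi> 0 = 0"
  unfolding is_norm_fn_def by blast

lemma norm_fn_triangle: "is_norm_fn \<phi> \<Longrightarrow> \<phi> (x + y) \<le> \<phi> x + \<phi> y"
  unfolding is_norm_fn_def by blast

lemma norm_fn_scaleR: "is_norm_fn \<phi> \<Longrightarrow> 0 \<le> c \<Longrightarrow> \<phi> (c *\<^sub>R x) = c * \<phi> x"
  unfolding is_norm_fn_def by simp

lemma norm_fn_minus: "is_norm_fn \<phi> \<Longrightarrow> \<phi> (- x) = \<phi> x"
  unfolding is_norm_fn_def by (metis abs_minus_cancel abs_one mult_1 scaleR_minus1_left)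

lemma norm_fn_minus_commute: "is_norm_fn \<phi> \<Longrightarrow> \<phi> (x - y) = \<phi> (y - x)"
  by (metis minus_diff_eq norm_fn_minus)

lemma norm_fn_ge_uniform_convex:
  assumes "is_norm_fn \<phi>" and "convex_on UNIV (\<lambda>x. \<phi> x - \<gamma> * norm x)"
  shows "\<gamma> * norm x \<le> \<phi> x"
proof -
  have "\<phi> 0 - \<gamma> * norm 0 \<le> (1/2) * (\<phi> x - \<gamma> * norm x) + (1/2) * (\<phi> (- x) - \<gamma> * norm (- x))"
    using convex_onD[OF assms(2), of "1/2" x "- x"] by simp
  then show ?thesis
    using assms(1) by (simp add: norm_fn_minus)
qed

lemma continuous_on_uniform_convex_norm_fn:
  fixes \<phi> :: "'a::euclidean_space \<Rightarrow> real"
  assumes "convex_on UNIV (\<lambda>x. \<phi> x - \<gamma> * norm x)"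
  shows "continuous_on UNIV \<phi>"
proof -
  have "continuous_on UNIV (\<lambda>x. (\<phi> x - \<gamma> * norm x) + \<gamma> * norm x)"
    using convex_on_continuous[OF open_UNIV assms] by (rule continuous_on_add) (intro continuous_intros)
  then show ?thesis
    by simp
qed

lemma dist_fn_le: "is_norm_fn \<phi> \<Longrightarrow> b \<in> K \<Longrightarrow> dist_fn \<phi> K y \<le> \<phi> (b - y)"
  unfolding dist_fn_def by (rule cInf_lower) (auto intro!: bdd_belowI[where m=0] simp: norm_fn_nonneg)

lemma dist_fn_greatest: "K \<noteq> {} \<Longrightarrow> (\<And>b. b \<in> K \<Longrightarrow> m \<le> \<phi> (b - y)) \<Longrightarrow> m \<le> dist_fn \<phi> K y"
  unfolding dist_fn_def by (rule cInf_greatest) auto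

lemma dist_fn_lipschitz:
  assumes "is_norm_fn \<phi>" and "K \<noteq> {}"
  shows "dist_fn \<phi> K y \<le> dist_fn \<phi> K y' + \<phi> (y' - y)"
proof -
  have "dist_fn \<phi> K y - \<phi> (y' - y) \<le> dist_fn \<phi> K y'"
  proof (rule dist_fn_greatest[OF assms(2)])
    fix b assume "b \<in> K"
    then have "dist_fn \<phi> K y \<le> \<phi> ((b - y') + (y' - y))"
      using dist_fn_le[OF assms(1)] by simp
    also have "\<dots> \<le> \<phi> (b - y') + \<phi> (y' - y)"
      by (rule norm_fn_triangle[OF assms(1)])
    finally show "dist_fn \<phi> K y - \<phi> (y' - y) \<le> \<phi> (b - y')"
      by simp
  qed
  then show ?thesis
    by simp
qed

lemma dist_fn_ray_le:
  assumes "is_norm_fn \<phi>" and "a \<in> K" and "0 \<le> c"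
  shows "dist_fn \<phi> K (a + c *\<^sub>R v) \<le> c * \<phi> v"
  using dist_fn_le[OF assms(1,2), of "a + c *\<^sub>R v"] assms
  by (simp add: norm_fn_minus norm_fn_scaleR)

lemma dist_fn_pos:
  assumes "is_norm_fn \<phi>" and "convex_on UNIV (\<lambda>x. \<phi> x - \<gamma> * norm x)" and "0 < \<gamma>"
    and "closed K" and "K \<noteq> {}" and "x \<notin> K"
  shows "0 < dist_fn \<phi> K x"
proof -
  obtain e where "0 < e" and e: "ball x e \<subseteq> - K"
    using assms(4,6) open_contains_ball[of "- K"] by blast
  have "\<gamma> * e \<le> dist_fn \<phi> K x"
  proof (rule dist_fn_greatest[OF assms(5)])
    fix b assume "b \<in> K"
    then have "e \<le> norm (b - x)"
      using e by (force simp: dist_norm norm_minus_commute)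
    then have "\<gamma> * e \<le> \<gamma> * norm (b - x)"
      using assms(3) by simp
    also have "\<dots> \<le> \<phi> (b - x)"
      by (rule norm_fn_ge_uniform_convex[OF assms(1,2)])
    finally show "\<gamma> * e \<le> \<phi> (b - x)" .
  qed
  with mult_pos_pos[OF assms(3) \<open>0 < e\<close>] show ?thesis
    by linarith
qed

lemma dist_fn_attained:
  fixes \<phi> :: "'a::euclidean_space \<Rightarrow> real"
  assumes nf: "is_norm_fn \<phi>" and cvx: "convex_on UNIV (\<lambda>x. \<phi> x - \<gamma> * norm x)" and "0 < \<gamma>"
    and "closed K" and "K \<noteq> {}"
  obtains a where "a \<in> K" and "\<phi> (x - a) = dist_fn \<phi> K x"
proof -
  define d where "d = dist_fn \<phi> K x"
  obtain b0 where "b0 \<in> K" and b0: "\<phi> (b0 - x) < d + 1"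
    using dist_fn_greatest[OF assms(5), of "d + 1" \<phi> x] unfolding d_def by (metis less_add_one not_le)
  define S where "S = K \<inter> cball x ((d + 1) / \<gamma>)"
  have far: "d + 1 < \<phi> (b - x)" if "b \<notin> cball x ((d + 1) / \<gamma>)" for b
  proof -
    have "d + 1 < \<gamma> * norm (b - x)"
      using that \<open>0 < \<gamma>\<close> by (simp add: dist_norm norm_minus_commute field_simps)
    also have "\<dots> \<le> \<phi> (b - x)"
      by (rule norm_fn_ge_uniform_convex[OF nf cvx])
    finally show ?thesis .
  qed
  have "compact S"
    unfolding S_def using \<open>closed K\<close> by (intro closed_Int_compact compact_cball)
  moreover have "continuous_on S (\<lambda>b. \<phi> (b - x))"
    by (rule continuous_on_compose2[OF continuous_on_uniform_convex_norm_fn[OF cvx]])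
      (intro continuous_intros, simp)
  moreover have "b0 \<in> S"
    using \<open>b0 \<in> K\<close> b0 far[of b0] unfolding S_def by auto
  ultimately obtain a where "a \<in> S" and amin: "\<And>b. b \<in> S \<Longrightarrow> \<phi> (a - x) \<le> \<phi> (b - x)"
    using continuous_attains_inf[of S "\<lambda>b. \<phi> (b - x)"] by auto
  have "\<phi> (a - x) \<le> \<phi> (b - x)" if "b \<in> K" for b
  proof (cases "b \<in> S")
    case False
    then have "d + 1 < \<phi> (b - x)"
      using far \<open>b \<in> K\<close> unfolding S_def by blast
    then show ?thesis
      using amin[OF \<open>b0 \<in> S\<close>] b0 by linarith
  qed (rule amin)
  then have "\<phi> (x - a) \<le> d"
    unfolding d_def by (subst norm_fn_minus_commute[OF nf]) (rule dist_fn_greatest[OF assms(5)])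
  moreover have "d \<le> \<phi> (x - a)"
    using dist_fn_le[OF nf, of a K x] \<open>a \<in> S\<close> norm_fn_minus_commute[OF nf]
    unfolding d_def S_def by simp
  ultimately show ?thesis
    using that[of a] \<open>a \<in> S\<close> unfolding S_def d_def by simp
qed

lemma norm_add_le_first_order:
  fixes v h :: "'a::real_inner"
  assumes "v \<noteq> 0"
  shows "norm (v + h) \<le> norm v + (v \<bullet> h) / norm v + (norm h)\<^sup>2 / (2 * norm v)"
proof -
  have sq: "(norm (v + h))\<^sup>2 = (norm v)\<^sup>2 + 2 * (v \<bullet> h) + (norm h)\<^sup>2"
    by (simp add: power2_norm_eq_inner inner_add inner_commute)
  have "2 * norm v * norm (v + h) \<le> (norm v)\<^sup>2 + (norm (v + h))\<^sup>2"
    using sum_squares_bound[of "norm v" "norm (v + h)"] by (simp add: power2_eq_square)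
  then show ?thesis
    using assms unfolding sq by (simp add: field_simps power2_eq_square)
qed

lemma norm_add_ge_first_order:
  fixes v s :: "'a::real_inner"
  assumes "v \<noteq> 0"
  shows "norm v + (v \<bullet> s) / norm v \<le> norm (v + s)"
proof -
  have "(norm v)\<^sup>2 + v \<bullet> s \<le> norm v * norm (v + s)"
    using Cauchy_Schwarz_ineq2[of v "v + s"] by (simp add: inner_add power2_norm_eq_inner)
  then show ?thesis
    using assms by (simp add: field_simps power2_eq_square)
qed

lemma norm_orthogonal_part_sq:
  fixes v s :: "'a::real_inner"
  assumes "v \<noteq> 0"
  shows "(norm (s - ((v \<bullet> s) / (norm v)\<^sup>2) *\<^sub>R v))\<^sup>2 = (norm s)\<^sup>2 - ((v \<bullet> s) / norm v)\<^sup>2"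
proof -
  define c where "c = (v \<bullet> s) / (norm v)\<^sup>2"
  have "(norm (s - c *\<^sub>R v))\<^sup>2 = (norm s)\<^sup>2 - 2 * c * (v \<bullet> s) + c\<^sup>2 * (norm v)\<^sup>2"
    unfolding power2_norm_eq_inner
    by (simp add: inner_diff_left inner_diff_right inner_commute[of s v] power2_eq_square right_diff_distrib)
  also have "\<dots> = (norm s)\<^sup>2 - ((v \<bullet> s) / norm v)\<^sup>2"
    using assms by (simp add: c_def power2_eq_square field_simps)
  finally show ?thesis
    by (simp add: c_def)
qed

lemma norm_sq_sub_inner_sq_le_remainder:
  fixes v s :: "'a::real_inner"
  assumes "v \<noteq> 0" and "0 < \<gamma>" and "norm s \<le> B"
    and remainder: "\<gamma> * (norm (v + s) - norm v - (v \<bullet> s) / norm v) \<le> e"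
  shows "(norm s)\<^sup>2 - ((v \<bullet> s) / norm v)\<^sup>2 \<le> e / \<gamma> * (2 * norm v + 2 * B)"
proof -
  define w where "w = (v \<bullet> s) / norm v"
  define E where "E = norm (v + s) - norm v - w"
  have vs: "v \<bullet> s = norm v * w"
    using assms by (simp add: w_def)
  have "0 \<le> E"
    using norm_add_ge_first_order[OF assms(1), of s] by (simp add: E_def w_def)
  have "norm v * w \<le> norm v * norm s"
    using Cauchy_Schwarz_ineq2[of v s] unfolding vs by (meson abs_ge_self order_trans)
  then have "w \<le> norm s"
    using \<open>v \<noteq> 0\<close> by simp
  have "(norm (v + s))\<^sup>2 = (norm v)\<^sup>2 + 2 * (v \<bullet> s) + (norm s)\<^sup>2"
    unfolding power2_norm_eq_inner by (simp add: inner_add inner_commute)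
  then have "(norm s)\<^sup>2 - w\<^sup>2 = E * (norm (v + s) + norm v + w)"
    unfolding vs E_def by (simp add: power2_eq_square algebra_simps)
  also have "\<dots> \<le> E * (2 * norm v + 2 * B)"
    using \<open>0 \<le> E\<close> \<open>w \<le> norm s\<close> \<open>norm s \<le> B\<close> norm_triangle_ineq[of v s]
    by (intro mult_left_mono) simp_all
  also have "\<dots> \<le> e / \<gamma> * (2 * norm v + 2 * B)"
  proof (rule mult_right_mono)
    show "E \<le> e / \<gamma>"
      using remainder \<open>0 < \<gamma>\<close> by (simp add: E_def w_def field_simps)
    show "0 \<le> 2 * norm v + 2 * B"
      using norm_ge_zero[of s] norm_ge_zero[of v] \<open>norm s \<le> B\<close> by linarith
  qed
  finally show ?thesis
    by (simp add: w_def)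
qed

lemma convex_on_subgradient_of_quadratic_minorant:
  fixes f :: "'a::real_normed_vector \<Rightarrow> real"
  assumes cvx: "convex_on UNIV f" and "linear L" and "0 < r"
    and minorant: "\<And>h. norm h < r \<Longrightarrow> f v + L h - M * (norm h)\<^sup>2 \<le> f (v + h)"
  shows "f v + L s \<le> f (v + s)"
proof -
  have slope: "L s - (f (v + s) - f v) \<le> M * t * (norm s)\<^sup>2"
    if "0 < t" "t < 1" "t * norm s < r" for t
  proof -
    have "f v + t * L s - M * t\<^sup>2 * (norm s)\<^sup>2 \<le> f (v + t *\<^sub>R s)"
      using minorant[of "t *\<^sub>R s"] that linear_scale[OF \<open>linear L\<close>]
      by (simp add: power_mult_distrib)
    also have "f (v + t *\<^sub>R s) = f ((1 - t) *\<^sub>R v + t *\<^sub>R (v + s))"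
      by (simp add: algebra_simps)
    also have "\<dots> \<le> (1 - t) * f v + t * f (v + s)"
      using convex_onD[OF cvx] that by simp
    finally have "t * (L s - (f (v + s) - f v)) \<le> t * (M * t * (norm s)\<^sup>2)"
      by (simp add: algebra_simps power2_eq_square)
    then show ?thesis
      using \<open>0 < t\<close> by simp
  qed
  define b where "b = min 1 (r / (norm s + 1))"
  have "0 < norm s + 1"
    by (simp add: add_nonneg_pos)
  have ev: "\<forall>\<^sub>F t in at_right 0. L s - (f (v + s) - f v) \<le> M * t * (norm s)\<^sup>2"
    unfolding eventually_at_right_field
  proof (intro exI[of _ b] conjI allI impI)
    show "0 < b"
      using \<open>0 < r\<close> \<open>0 < norm s + 1\<close> by (simp add: b_def)
    fix t :: real
    assume "0 < t" "t < b"
    then have "t * (norm s + 1) < r"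
      using \<open>0 < norm s + 1\<close> by (simp add: b_def field_simps)
    then have "t * norm s < r"
      using \<open>0 < t\<close> by (simp add: algebra_simps)
    then show "L s - (f (v + s) - f v) \<le> M * t * (norm s)\<^sup>2"
      using slope \<open>0 < t\<close> \<open>t < b\<close> by (simp add: b_def)
  qed
  have lim: "((\<lambda>t. M * t * (norm s)\<^sup>2) \<longlongrightarrow> 0) (at_right 0)"
    by (intro tendsto_mult_right_zero tendsto_mult_left_zero tendsto_ident_at)
  show ?thesis
    using tendsto_le[OF trivial_limit_at_right_real lim tendsto_const ev] by simp
qed

lemma subgradient_eq_of_positively_homogeneous:
  fixes f :: "'a::real_vector \<Rightarrow> real"
  assumes "linear L" and hom: "\<And>c. 0 \<le> c \<Longrightarrow> f (c *\<^sub>R v) = c * f v"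
    and sub: "\<And>s. f v + L s \<le> f (v + s)"
  shows "L v = f v"
proof (rule antisym)
  show "L v \<le> f v"
    using sub[of v] hom[of 2] by (simp add: scaleR_2)
  have "v + (- 1/2) *\<^sub>R v = (1/2) *\<^sub>R v"
    using scaleR_add_left[of 1 "- 1/2" v] by simp
  then have "f v + L ((- 1/2) *\<^sub>R v) \<le> f ((1/2) *\<^sub>R v)"
    using sub[of "(- 1/2) *\<^sub>R v"] by simp
  then have "f v + (- 1/2) * L v \<le> f ((1/2) *\<^sub>R v)"
    unfolding linear_scale[OF \<open>linear L\<close>] by simp
  then show "f v \<le> L v"
    using hom[of "1/2"] by simp
qed

lemma uniformly_convex_subgradient:
  fixes \<phi> :: "'a::real_inner \<Rightarrow> real"
  assumes cvx: "convex_on UNIV (\<lambda>x. \<phi> x - \<gamma> * norm x)" and "0 \<le> \<gamma>" and "v \<noteq> 0"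
    and "linear L" and "0 < r"
    and minorant: "\<And>h. norm h < r \<Longrightarrow> \<phi> v + L h - M * (norm h)\<^sup>2 \<le> \<phi> (v + h)"
  shows "\<phi> v - \<gamma> * norm v + (L s - \<gamma> * ((v \<bullet> s) / norm v)) \<le> \<phi> (v + s) - \<gamma> * norm (v + s)"
proof (rule convex_on_subgradient_of_quadratic_minorant[OF cvx _ \<open>0 < r\<close>])
  show "linear (\<lambda>h. L h - \<gamma> * ((v \<bullet> h) / norm v))"
    using \<open>linear L\<close>
    by (simp add: linear_iff algebra_simps add_divide_distrib)
  fix h :: 'a
  assume "norm h < r"
  have "\<gamma> * norm (v + h) \<le> \<gamma> * (norm v + (v \<bullet> h) / norm v + (norm h)\<^sup>2 / (2 * norm v))"
    using norm_add_le_first_order[OF \<open>v \<noteq> 0\<close>, of h] \<open>0 \<le> \<gamma>\<close> by (rule mult_left_mono)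
  then show "\<phi> v - \<gamma> * norm v + (L h - \<gamma> * ((v \<bullet> h) / norm v))
      - (M + \<gamma> / (2 * norm v)) * (norm h)\<^sup>2 \<le> \<phi> (v + h) - \<gamma> * norm (v + h)"
    using minorant[OF \<open>norm h < r\<close>] by (simp add: algebra_simps)
qed

lemma uniformly_convex_slope_eq:
  fixes \<phi> :: "'a::euclidean_space \<Rightarrow> real"
  assumes "is_norm_fn \<phi>" and cvx: "convex_on UNIV (\<lambda>x. \<phi> x - \<gamma> * norm x)" and "0 \<le> \<gamma>"
    and "v \<noteq> 0" and "linear L" and "0 < r"
    and "\<And>h. norm h < r \<Longrightarrow> \<phi> v + L h - M * (norm h)\<^sup>2 \<le> \<phi> (v + h)"
  shows "L v = \<phi> v"
proof -
  have "L v - \<gamma> * ((v \<bullet> v) / norm v) = \<phi> v - \<gamma> * norm v"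
  proof (rule subgradient_eq_of_positively_homogeneous
      [where L = "\<lambda>h. L h - \<gamma> * ((v \<bullet> h) / norm v)" and f = "\<lambda>x. \<phi> x - \<gamma> * norm x"])
    show "linear (\<lambda>h. L h - \<gamma> * ((v \<bullet> h) / norm v))"
      using \<open>linear L\<close>
      by (simp add: linear_iff algebra_simps add_divide_distrib)
    show "\<phi> (c *\<^sub>R v) - \<gamma> * norm (c *\<^sub>R v) = c * (\<phi> v - \<gamma> * norm v)" if "0 \<le> c" for c
      using norm_fn_scaleR[OF \<open>is_norm_fn \<phi>\<close> that] that by (simp add: algebra_simps)
    show "\<phi> v - \<gamma> * norm v + (L s - \<gamma> * ((v \<bullet> s) / norm v)) \<le> \<phi> (v + s) - \<gamma> * norm (v + s)" for s
      using uniformly_convex_subgradient[OF cvx assms(3-7)] .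
  qed
  moreover have "(v \<bullet> v) / norm v = norm v"
    using \<open>v \<noteq> 0\<close> by (simp add: dot_square_norm power2_eq_square)
  ultimately show ?thesis
    by simp
qed

lemma ptwise_twice_diff_quadratic_minorant:
  fixes f :: "'a::euclidean_space \<Rightarrow> real"
  assumes "ptwise_twice_diff f x"
  obtains L M r where "linear L" and "0 \<le> M" and "0 < r"
    and "\<And>h. norm h < r \<Longrightarrow> f x + L h - M * (norm h)\<^sup>2 \<le> f (x + h)"
proof -
  obtain L Q where "linear L" and "bilinear Q"
    and lim: "((\<lambda>y. \<bar>f y - (f x + L (y - x) + Q (y - x) (y - x))\<bar> / (norm (y - x))\<^sup>2) \<longlongrightarrow> 0) (at x)"
    using assms unfolding ptwise_twice_diff_def by blast
  obtain KQ where "0 \<le> KQ" and KQ: "\<And>u w. norm (Q u w) \<le> norm u * norm w * KQ"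
    using bounded_bilinear.nonneg_bounded \<open>bilinear Q\<close> bilinear_conv_bounded_bilinear by blast
  obtain r where "0 < r" and close: "\<And>y. y \<noteq> x \<Longrightarrow> dist y x < r \<Longrightarrow>
      \<bar>f y - (f x + L (y - x) + Q (y - x) (y - x))\<bar> / (norm (y - x))\<^sup>2 < 1"
    using tendstoD[OF lim zero_less_one] unfolding eventually_at by auto
  have minorant: "f x + L h - (KQ + 1) * (norm h)\<^sup>2 \<le> f (x + h)" if "norm h < r" for h
  proof (cases "h = 0")
    case True
    then show ?thesis
      using linear_0[OF \<open>linear L\<close>] by simp
  next
    case False
    then have "\<bar>f (x + h) - (f x + L h + Q h h)\<bar> < (norm h)\<^sup>2"
      using close[of "x + h"] that by (simp add: dist_norm field_simps)
    moreover have "\<bar>Q h h\<bar> \<le> KQ * (norm h)\<^sup>2"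
      using KQ[of h h] by (simp add: power2_eq_square algebra_simps)
    ultimately show ?thesis
      by (simp add: algebra_simps abs_less_iff abs_le_iff)
  qed
  show ?thesis
    by (rule that[OF \<open>linear L\<close> _ \<open>0 < r\<close> minorant]) (use \<open>0 \<le> KQ\<close> in simp_all)
qed

lemma inner_component_sq_le:
  fixes v s :: "'a::real_inner"
  assumes "v \<noteq> 0" and "linear L" and "L v \<noteq> 0" and KL: "\<And>u. \<bar>L u\<bar> \<le> KL * norm u"
  shows "((v \<bullet> s) / norm v)\<^sup>2
    \<le> 2 * (norm v / L v)\<^sup>2 * ((L s)\<^sup>2 + KL\<^sup>2 * ((norm s)\<^sup>2 - ((v \<bullet> s) / norm v)\<^sup>2))"
proof -
  define c where "c = (v \<bullet> s) / (norm v)\<^sup>2"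
  define p where "p = s - c *\<^sub>R v"
  have "L s = c * L v + L p"
    using linear_add[OF \<open>linear L\<close>, of "c *\<^sub>R v" p] linear_scale[OF \<open>linear L\<close>]
    by (simp add: p_def)
  then have "\<bar>c * L v\<bar> \<le> \<bar>L s\<bar> + KL * norm p"
    using KL[of p] by linarith
  then have "(c * L v)\<^sup>2 \<le> (\<bar>L s\<bar> + KL * norm p)\<^sup>2"
    using power_mono[of "\<bar>c * L v\<bar>" _ 2] by simp
  also have "\<dots> \<le> 2 * ((L s)\<^sup>2 + KL\<^sup>2 * (norm p)\<^sup>2)"
    using sum_squares_bound[of "\<bar>L s\<bar>" "KL * norm p"]
    by (simp add: power2_eq_square algebra_simps)
  finally have bound: "(c * L v)\<^sup>2 \<le> 2 * ((L s)\<^sup>2 + KL\<^sup>2 * (norm p)\<^sup>2)" .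
  have "(v \<bullet> s) / norm v = (norm v / L v) * (c * L v)"
    using assms(1,3) by (simp add: c_def power2_eq_square field_simps)
  then have "((v \<bullet> s) / norm v)\<^sup>2 = (norm v / L v)\<^sup>2 * (c * L v)\<^sup>2"
    by (simp only: power_mult_distrib)
  also have "\<dots> \<le> (norm v / L v)\<^sup>2 * (2 * ((L s)\<^sup>2 + KL\<^sup>2 * (norm p)\<^sup>2))"
    using bound by (rule mult_left_mono) simp
  also have "(norm p)\<^sup>2 = (norm s)\<^sup>2 - ((v \<bullet> s) / norm v)\<^sup>2"
    using norm_orthogonal_part_sq[OF assms(1)] by (simp add: p_def c_def)
  finally show ?thesis
    by (simp only: mult.left_commute[of 2])
qed

lemma norm_remainder_squeeze_bound:
  fixes v :: "'a::euclidean_space"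
  assumes "v \<noteq> 0" and "linear L" and "L v \<noteq> 0" and "0 < \<gamma>" and "0 \<le> M" and "0 \<le> B"
  obtains Z where "0 \<le> Z"
    and "\<And>t s. 0 < t \<Longrightarrow> t \<le> 1 \<Longrightarrow> norm s \<le> B \<Longrightarrow>
      \<gamma> * (norm (v + s) - norm v - (v \<bullet> s) / norm v) \<le> - L s \<Longrightarrow>
      - L s \<le> M * t * (norm s)\<^sup>2 \<Longrightarrow> (norm s)\<^sup>2 \<le> t * Z * (norm s)\<^sup>2"
proof -
  obtain KL where KL: "\<And>u. \<bar>L u\<bar> \<le> KL * norm u"
    using bounded_linear.bounded[of L] \<open>linear L\<close> linear_conv_bounded_linear
    by (metis mult.commute real_norm_def)
  define A where "A = M * (2 * norm v + 2 * B) / \<gamma>"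
  show ?thesis
  proof (rule that[of "2 * (norm v / L v)\<^sup>2 * (M\<^sup>2 * B\<^sup>2 + KL\<^sup>2 * A) + A"])
    show "0 \<le> 2 * (norm v / L v)\<^sup>2 * (M\<^sup>2 * B\<^sup>2 + KL\<^sup>2 * A) + A"
      using assms(4-6) by (simp add: A_def)
    fix t and s :: 'a
    assume "0 < t" and "t \<le> 1" and "norm s \<le> B"
      and lower: "\<gamma> * (norm (v + s) - norm v - (v \<bullet> s) / norm v) \<le> - L s"
      and upper: "- L s \<le> M * t * (norm s)\<^sup>2"
    define w where "w = (v \<bullet> s) / norm v"
    have "(norm s)\<^sup>2 \<le> B\<^sup>2"
      using \<open>norm s \<le> B\<close> by (simp add: power_mono)
    then have "t * (norm s)\<^sup>2 \<le> B\<^sup>2"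
      using mult_left_le_one_le[of "(norm s)\<^sup>2" t] \<open>t \<le> 1\<close> \<open>0 < t\<close> by simp
    have "0 \<le> \<gamma> * (norm (v + s) - norm v - (v \<bullet> s) / norm v)"
      using norm_add_ge_first_order[OF \<open>v \<noteq> 0\<close>, of s] \<open>0 < \<gamma>\<close> by simp
    then have "(L s)\<^sup>2 \<le> (M * t * (norm s)\<^sup>2)\<^sup>2"
      using lower power_mono[OF upper, of 2] by simp
    also have "\<dots> = M\<^sup>2 * (t * (norm s)\<^sup>2) * (t * (norm s)\<^sup>2)"
      by (simp add: power2_eq_square)
    also have "\<dots> \<le> M\<^sup>2 * B\<^sup>2 * (t * (norm s)\<^sup>2)"
      using \<open>t * (norm s)\<^sup>2 \<le> B\<^sup>2\<close> \<open>0 < t\<close> by (intro mult_right_mono mult_left_mono) simp_all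
    finally have parallel: "(L s)\<^sup>2 \<le> M\<^sup>2 * B\<^sup>2 * (t * (norm s)\<^sup>2)" .
    have "(norm s)\<^sup>2 - w\<^sup>2 \<le> M * t * (norm s)\<^sup>2 / \<gamma> * (2 * norm v + 2 * B)"
      using norm_sq_sub_inner_sq_le_remainder[OF \<open>v \<noteq> 0\<close> \<open>0 < \<gamma>\<close> \<open>norm s \<le> B\<close>
          order_trans[OF lower upper]]
      unfolding w_def by simp
    then have orthogonal: "(norm s)\<^sup>2 - w\<^sup>2 \<le> A * (t * (norm s)\<^sup>2)"
      by (simp add: A_def mult_ac)
    have "w\<^sup>2 \<le> 2 * (norm v / L v)\<^sup>2 * ((L s)\<^sup>2 + KL\<^sup>2 * ((norm s)\<^sup>2 - w\<^sup>2))"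
      using inner_component_sq_le[OF \<open>v \<noteq> 0\<close> \<open>linear L\<close> \<open>L v \<noteq> 0\<close> KL] by (simp add: w_def)
    also have "\<dots> \<le> 2 * (norm v / L v)\<^sup>2 * (M\<^sup>2 * B\<^sup>2 * (t * (norm s)\<^sup>2) + KL\<^sup>2 * (A * (t * (norm s)\<^sup>2)))"
      using parallel orthogonal by (intro mult_left_mono add_mono) simp_all
    finally show "(norm s)\<^sup>2 \<le> t * (2 * (norm v / L v)\<^sup>2 * (M\<^sup>2 * B\<^sup>2 + KL\<^sup>2 * A) + A) * (norm s)\<^sup>2"
      using orthogonal by (simp add: algebra_simps)
  qed
qed

lemma norm_remainder_squeeze:
  fixes v :: "'a::euclidean_space"
  assumes "v \<noteq> 0" and "linear L" and "L v \<noteq> 0" and "0 < \<gamma>" and "0 \<le> M" and "0 \<le> B"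
  obtains \<tau> where "0 < \<tau>"
    and "\<And>t s. 0 < t \<Longrightarrow> t < \<tau> \<Longrightarrow> norm s \<le> B \<Longrightarrow>
      \<gamma> * (norm (v + s) - norm v - (v \<bullet> s) / norm v) \<le> - L s \<Longrightarrow>
      - L s \<le> M * t * (norm s)\<^sup>2 \<Longrightarrow> s = 0"
proof -
  obtain Z where "0 \<le> Z" and bound: "\<And>t s. 0 < t \<Longrightarrow> t \<le> 1 \<Longrightarrow> norm s \<le> B \<Longrightarrow>
      \<gamma> * (norm (v + s) - norm v - (v \<bullet> s) / norm v) \<le> - L s \<Longrightarrow>
      - L s \<le> M * t * (norm s)\<^sup>2 \<Longrightarrow> (norm s)\<^sup>2 \<le> t * Z * (norm s)\<^sup>2"
    using norm_remainder_squeeze_bound[OF assms] by blast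
  show ?thesis
  proof (rule that[of "1 / (Z + 1)"])
    show "0 < 1 / (Z + 1)"
      using \<open>0 \<le> Z\<close> by simp
    fix t and s :: 'a
    assume "0 < t" and "t < 1 / (Z + 1)"
    then have "t * Z + t < 1"
      using \<open>0 \<le> Z\<close> by (simp add: field_simps)
    moreover have "0 \<le> t * Z"
      using \<open>0 < t\<close> \<open>0 \<le> Z\<close> by simp
    ultimately have "t * Z < 1" and "t \<le> 1"
      using \<open>0 < t\<close> by simp_all
    moreover assume "norm s \<le> B" and "\<gamma> * (norm (v + s) - norm v - (v \<bullet> s) / norm v) \<le> - L s"
      and "- L s \<le> M * t * (norm s)\<^sup>2"
    ultimately have "(1 - t * Z) * (norm s)\<^sup>2 \<le> 0"
      using bound[of t s] \<open>0 < t\<close> by (simp add: algebra_simps)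
    then show "s = 0"
      using \<open>t * Z < 1\<close> by (simp add: mult_le_0_iff)
  qed
qed

lemma dist_fn_twice_diff_minorants:
  fixes \<phi> :: "'a::euclidean_space \<Rightarrow> real"
  assumes nf: "is_norm_fn \<phi>" and cvx: "convex_on UNIV (\<lambda>x. \<phi> x - \<gamma> * norm x)" and "0 \<le> \<gamma>"
    and "a \<in> K" and nearest: "\<phi> (x - a) = dist_fn \<phi> K x" and "x \<noteq> a"
    and "ptwise_twice_diff (dist_fn \<phi> K) x"
  obtains L M r where "linear L" and "0 \<le> M" and "0 < r" and "L (x - a) = \<phi> (x - a)"
    and "\<And>h. norm h < r \<Longrightarrow> dist_fn \<phi> K x + L h - M * (norm h)\<^sup>2 \<le> dist_fn \<phi> K (x + h)"
    and "\<And>s. \<gamma> * (norm (x - a + s) - norm (x - a) - ((x - a) \<bullet> s) / norm (x - a))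
        \<le> \<phi> (x - a + s) - \<phi> (x - a) - L s"
proof -
  define v where "v = x - a"
  have "v \<noteq> 0"
    using \<open>x \<noteq> a\<close> by (simp add: v_def)
  obtain L M r where "linear L" and "0 \<le> M" and "0 < r"
    and minorant_D: "\<And>h. norm h < r \<Longrightarrow> dist_fn \<phi> K x + L h - M * (norm h)\<^sup>2 \<le> dist_fn \<phi> K (x + h)"
    using ptwise_twice_diff_quadratic_minorant[OF \<open>ptwise_twice_diff (dist_fn \<phi> K) x\<close>] by metis
  have minorant: "\<phi> v + L h - M * (norm h)\<^sup>2 \<le> \<phi> (v + h)" if "norm h < r" for h
    using minorant_D[OF that] dist_fn_le[OF nf \<open>a \<in> K\<close>, of "x + h"] nearest
      norm_fn_minus_commute[OF nf, of a "x + h"]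
    by (simp add: v_def algebra_simps)
  show ?thesis
  proof (rule that[OF \<open>linear L\<close> \<open>0 \<le> M\<close> \<open>0 < r\<close> _ minorant_D])
    show "L (x - a) = \<phi> (x - a)"
      using uniformly_convex_slope_eq[OF nf cvx \<open>0 \<le> \<gamma>\<close> \<open>v \<noteq> 0\<close> \<open>linear L\<close> \<open>0 < r\<close> minorant]
      by (simp add: v_def)
    show "\<gamma> * (norm (x - a + s) - norm (x - a) - ((x - a) \<bullet> s) / norm (x - a))
        \<le> \<phi> (x - a + s) - \<phi> (x - a) - L s" for s
      using uniformly_convex_subgradient[OF cvx \<open>0 \<le> \<gamma>\<close> \<open>v \<noteq> 0\<close> \<open>linear L\<close> \<open>0 < r\<close> minorant, of s]
      by (simp add: v_def algebra_simps)
  qed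
qed

lemma quadratic_minorant_descent_bound:
  fixes f :: "'a::real_normed_vector \<Rightarrow> real"
  assumes "linear L" and "0 < t" and "norm (t *\<^sub>R s) < r"
    and minorant: "\<And>h. norm h < r \<Longrightarrow> f x + L h - M * (norm h)\<^sup>2 \<le> f (x + h)"
    and descent: "f (x - t *\<^sub>R s) \<le> f x"
  shows "- L s \<le> M * t * (norm s)\<^sup>2"
proof -
  have "f x + L (- (t *\<^sub>R s)) - M * (norm (- (t *\<^sub>R s)))\<^sup>2 \<le> f x"
    using minorant[of "- (t *\<^sub>R s)"] descent \<open>norm (t *\<^sub>R s) < r\<close> by simp
  then have "t * (- L s) \<le> t * (M * t * (norm s)\<^sup>2)"
    using \<open>0 < t\<close> linear_neg[OF \<open>linear L\<close>] linear_scale[OF \<open>linear L\<close>]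
    by (simp add: power2_eq_square algebra_simps)
  then show ?thesis
    using \<open>0 < t\<close> by (rule mult_left_le_imp_le)
qed

lemma closer_competitor_rescaled:
  fixes \<phi> :: "'a::euclidean_space \<Rightarrow> real"
  assumes nf: "is_norm_fn \<phi>" and cvx: "convex_on UNIV (\<lambda>x. \<phi> x - \<gamma> * norm x)" and "0 < \<gamma>"
    and "0 < t" and "p \<in> K" and nearest: "\<phi> (x - a) = dist_fn \<phi> K x"
    and closer: "\<phi> (p - (a + (1 + t) *\<^sub>R (x - a))) < (1 + t) * \<phi> (x - a)"
  defines "s \<equiv> (1 / (1 + t)) *\<^sub>R (a - p)"
  shows "\<phi> (x - a + s) < \<phi> (x - a)" and "norm s < norm (x - a) + \<phi> (x - a) / \<gamma>"
    and "dist_fn \<phi> K (x - t *\<^sub>R s) < dist_fn \<phi> K x"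
proof -
  define v where "v = x - a"
  define y where "y = a + (1 + t) *\<^sub>R v"
  have a_eq: "a = p + (1 + t) *\<^sub>R s"
    using \<open>0 < t\<close> by (simp add: s_def)
  have "y - p = (1 + t) *\<^sub>R (v + s)"
    unfolding y_def a_eq by (simp add: algebra_simps)
  then have "\<phi> (p - y) = (1 + t) * \<phi> (v + s)"
    using norm_fn_minus_commute[OF nf, of p y] norm_fn_scaleR[OF nf, of "1 + t"] \<open>0 < t\<close> by simp
  then show closer_s: "\<phi> (x - a + s) < \<phi> (x - a)"
    using closer \<open>0 < t\<close> by (simp add: y_def v_def)
  have "\<gamma> * ((1 + t) * norm s) = \<gamma> * norm (a - p)"
    using \<open>0 < t\<close> by (simp add: s_def)
  also have "\<dots> \<le> \<gamma> * norm (a - y) + \<gamma> * norm (y - p)"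
    using norm_triangle_ineq[of "a - y" "y - p"] \<open>0 < \<gamma>\<close> by (simp add: distrib_left[symmetric])
  also have "\<dots> < \<gamma> * ((1 + t) * norm v) + (1 + t) * \<phi> v"
    using norm_fn_ge_uniform_convex[OF nf cvx, of "y - p"] closer
      norm_fn_minus_commute[OF nf, of p y] \<open>0 < t\<close>
    by (simp add: y_def v_def)
  also have "\<dots> = \<gamma> * ((1 + t) * (norm v + \<phi> v / \<gamma>))"
    using \<open>0 < \<gamma>\<close> by (simp add: field_simps)
  finally show "norm s < norm (x - a) + \<phi> (x - a) / \<gamma>"
    using \<open>0 < \<gamma>\<close> \<open>0 < t\<close> by (simp add: v_def)
  have "dist_fn \<phi> K (x - t *\<^sub>R s) \<le> \<phi> (p - (x - t *\<^sub>R s))"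
    by (rule dist_fn_le[OF nf \<open>p \<in> K\<close>])
  also have "p - (x - t *\<^sub>R s) = - (x - a + s)"
    unfolding a_eq by (simp add: algebra_simps)
  finally have "dist_fn \<phi> K (x - t *\<^sub>R s) \<le> \<phi> (x - a + s)"
    by (simp only: norm_fn_minus[OF nf])
  then show "dist_fn \<phi> K (x - t *\<^sub>R s) < dist_fn \<phi> K x"
    using closer_s nearest by simp
qed

lemma dist_fn_ray_extends:
  fixes \<phi> :: "'a::euclidean_space \<Rightarrow> real"
  assumes nf: "is_norm_fn \<phi>" and cvx: "convex_on UNIV (\<lambda>x. \<phi> x - \<gamma> * norm x)" and "0 < \<gamma>"
    and "K \<noteq> {}" and "a \<in> K" and nearest: "\<phi> (x - a) = dist_fn \<phi> K x"
    and "0 < dist_fn \<phi> K x" and "ptwise_twice_diff (dist_fn \<phi> K) x"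
  obtains t where "0 < t" and "dist_fn \<phi> K (a + (1 + t) *\<^sub>R (x - a)) = (1 + t) * dist_fn \<phi> K x"
proof -
  define v where "v = x - a"
  have "x \<noteq> a"
    using nearest \<open>0 < dist_fn \<phi> K x\<close> nf by auto
  then have "v \<noteq> 0"
    by (simp add: v_def)
  obtain L M r where "linear L" and "0 \<le> M" and "0 < r" and "L v = \<phi> v"
    and minorant: "\<And>h. norm h < r \<Longrightarrow> dist_fn \<phi> K x + L h - M * (norm h)\<^sup>2 \<le> dist_fn \<phi> K (x + h)"
    and subgradient: "\<And>s. \<gamma> * (norm (v + s) - norm v - (v \<bullet> s) / norm v) \<le> \<phi> (v + s) - \<phi> v - L s"
    using dist_fn_twice_diff_minorants[OF nf cvx less_imp_le[OF \<open>0 < \<gamma>\<close>] \<open>a \<in> K\<close> nearest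
        \<open>x \<noteq> a\<close> \<open>ptwise_twice_diff (dist_fn \<phi> K) x\<close>]
    unfolding v_def by blast
  define B where "B = norm v + \<phi> v / \<gamma>"
  have "0 < B"
    using \<open>v \<noteq> 0\<close> nf \<open>0 < \<gamma>\<close> by (simp add: B_def add_pos_nonneg norm_fn_nonneg)
  obtain \<tau> where "0 < \<tau>" and squeeze: "\<And>t s. 0 < t \<Longrightarrow> t < \<tau> \<Longrightarrow> norm s \<le> B \<Longrightarrow>
      \<gamma> * (norm (v + s) - norm v - (v \<bullet> s) / norm v) \<le> - L s \<Longrightarrow>
      - L s \<le> M * t * (norm s)\<^sup>2 \<Longrightarrow> s = 0"
    using norm_remainder_squeeze[OF \<open>v \<noteq> 0\<close> \<open>linear L\<close> _ \<open>0 < \<gamma>\<close> \<open>0 \<le> M\<close>, of B]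
      \<open>L v = \<phi> v\<close> nearest \<open>0 < dist_fn \<phi> K x\<close> \<open>0 < B\<close> by (auto simp: v_def)
  define t where "t = min (\<tau> / 2) (r / B)"
  have "0 < t" and "t < \<tau>" and "t * B \<le> r"
    using \<open>0 < \<tau>\<close> \<open>0 < r\<close> \<open>0 < B\<close> by (auto simp: t_def min_def field_simps)
  have "(1 + t) * \<phi> v \<le> \<phi> (p - (a + (1 + t) *\<^sub>R v))" if "p \<in> K" for p
  proof (rule ccontr)
    define s where "s = (1 / (1 + t)) *\<^sub>R (a - p)"
    assume "\<not> ?thesis"
    then have "\<phi> (v + s) < \<phi> v" and "norm s < B" and "dist_fn \<phi> K (x - t *\<^sub>R s) < dist_fn \<phi> K x"
      using closer_competitor_rescaled[OF nf cvx \<open>0 < \<gamma>\<close> \<open>0 < t\<close> \<open>p \<in> K\<close> nearest]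
      unfolding s_def v_def B_def by auto
    have "norm (t *\<^sub>R s) < r"
      using \<open>norm s < B\<close> \<open>0 < t\<close> \<open>t * B \<le> r\<close> by (simp add: mult_strict_left_mono[THEN order.strict_trans2])
    then have "- L s \<le> M * t * (norm s)\<^sup>2"
      using quadratic_minorant_descent_bound[OF \<open>linear L\<close> \<open>0 < t\<close> _ minorant]
        \<open>dist_fn \<phi> K (x - t *\<^sub>R s) < dist_fn \<phi> K x\<close> by simp
    moreover have "\<gamma> * (norm (v + s) - norm v - (v \<bullet> s) / norm v) \<le> - L s"
      using subgradient[of s] \<open>\<phi> (v + s) < \<phi> v\<close> by simp
    ultimately have "s = 0"
      using squeeze[of t s] \<open>0 < t\<close> \<open>t < \<tau>\<close> \<open>norm s < B\<close> by simp
    then show False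
      using \<open>\<phi> (v + s) < \<phi> v\<close> by simp
  qed
  then have "(1 + t) * \<phi> v \<le> dist_fn \<phi> K (a + (1 + t) *\<^sub>R v)"
    by (rule dist_fn_greatest[OF \<open>K \<noteq> {}\<close>])
  moreover have "dist_fn \<phi> K (a + (1 + t) *\<^sub>R v) \<le> (1 + t) * \<phi> v"
    using dist_fn_ray_le[OF nf \<open>a \<in> K\<close>, of "1 + t" v] \<open>0 < t\<close> by simp
  ultimately show ?thesis
    using that \<open>0 < t\<close> nearest by (simp add: v_def)
qed

lemma rho_fn_gt_one:
  fixes \<phi> :: "'a::euclidean_space \<Rightarrow> real"
  assumes nf: "is_norm_fn \<phi>" and cvx: "convex_on UNIV (\<lambda>x. \<phi> x - \<gamma> * norm x)" and "0 < \<gamma>"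
    and "closed K" and "K \<noteq> {}" and "x \<notin> K" and "ptwise_twice_diff (dist_fn \<phi> K) x"
  shows "1 < rho_fn \<phi> K x"
proof -
  define a where "a = (SOME a. a \<in> xi_fn \<phi> K x)"
  obtain b where "b \<in> xi_fn \<phi> K x"
    using dist_fn_attained[OF nf cvx \<open>0 < \<gamma>\<close> \<open>closed K\<close> \<open>K \<noteq> {}\<close>, of x]
    unfolding xi_fn_def by blast
  then have "a \<in> K" and "\<phi> (x - a) = dist_fn \<phi> K x"
    using someI[of "\<lambda>a. a \<in> xi_fn \<phi> K x"] unfolding a_def xi_fn_def by blast+
  then obtain t where "0 < t"
    and "dist_fn \<phi> K (a + (1 + t) *\<^sub>R (x - a)) = (1 + t) * dist_fn \<phi> K x"
    using dist_fn_ray_extends[OF nf cvx \<open>0 < \<gamma>\<close> \<open>K \<noteq> {}\<close>] assms(6,7)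
      dist_fn_pos[OF nf cvx \<open>0 < \<gamma>\<close> \<open>closed K\<close> \<open>K \<noteq> {}\<close>] by metis
  then have "ereal (1 + t) \<le> rho_fn \<phi> K x"
    unfolding rho_fn_def Let_def a_def[symmetric] by (intro Sup_upper) auto
  moreover have "1 < ereal (1 + t)"
    using \<open>0 < t\<close> by simp
  ultimately show ?thesis
    by order
qed

lemma dist_fn_at_r_fn:
  fixes \<phi> :: "'a::euclidean_space \<Rightarrow> real"
  assumes nf: "is_norm_fn \<phi>" and "K \<noteq> {}" and "(a, \<eta>) \<in> normal_bundle \<phi> K"
    and R: "r_fn \<phi> K a \<eta> = ereal R"
  shows "0 < R" and "dist_fn \<phi> K (a + R *\<^sub>R \<eta>) = R"
proof -
  define S where "S = {s. 0 < s \<and> dist_fn \<phi> K (a + s *\<^sub>R \<eta>) = s}"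
  have "a \<in> K" and "\<phi> \<eta> = 1" and "S \<noteq> {}"
    using assms(3) unfolding normal_bundle_def S_def by auto
  have Sup_S: "Sup (ereal ` S) = ereal R"
    using R by (simp add: r_fn_def S_def)
  have le_R: "s \<le> R" if "s \<in> S" for s
    using Sup_upper[of "ereal s" "ereal ` S"] that Sup_S by simp
  then show "0 < R"
    using \<open>S \<noteq> {}\<close> unfolding S_def by force
  show "dist_fn \<phi> K (a + R *\<^sub>R \<eta>) = R"
  proof (rule antisym)
    show "dist_fn \<phi> K (a + R *\<^sub>R \<eta>) \<le> R"
      using dist_fn_ray_le[OF nf \<open>a \<in> K\<close>, of R \<eta>] \<open>0 < R\<close> \<open>\<phi> \<eta> = 1\<close> by simp
    have "s \<le> (dist_fn \<phi> K (a + R *\<^sub>R \<eta>) + R) / 2" if "s \<in> S" for s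
    proof -
      have "s \<le> dist_fn \<phi> K (a + R *\<^sub>R \<eta>) + \<phi> ((a + R *\<^sub>R \<eta>) - (a + s *\<^sub>R \<eta>))"
        using dist_fn_lipschitz[OF nf \<open>K \<noteq> {}\<close>, of "a + s *\<^sub>R \<eta>" "a + R *\<^sub>R \<eta>"] that
        unfolding S_def by simp
      also have "(a + R *\<^sub>R \<eta>) - (a + s *\<^sub>R \<eta>) = (R - s) *\<^sub>R \<eta>"
        by (simp add: algebra_simps)
      finally show ?thesis
        using norm_fn_scaleR[OF nf, of "R - s" \<eta>] le_R[OF that] \<open>\<phi> \<eta> = 1\<close> by simp
    qed
    then have "Sup (ereal ` S) \<le> ereal ((dist_fn \<phi> K (a + R *\<^sub>R \<eta>) + R) / 2)"
      by (intro Sup_least) auto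
    then show "R \<le> dist_fn \<phi> K (a + R *\<^sub>R \<eta>)"
      unfolding Sup_S by simp
  qed
qed

lemma cut_locus_subset_Sigma2:
  fixes \<phi> :: "'a::euclidean_space \<Rightarrow> real"
  assumes nf: "is_norm_fn \<phi>" and cvx: "convex_on UNIV (\<lambda>x. \<phi> x - \<gamma> * norm x)" and "0 < \<gamma>"
    and "K \<noteq> {}"
  shows "cut_locus \<phi> K \<subseteq> Sigma2 \<phi> K"
proof
  fix z
  assume "z \<in> cut_locus \<phi> K"
  then obtain a \<eta> where nb: "(a, \<eta>) \<in> normal_bundle \<phi> K" and "r_fn \<phi> K a \<eta> < \<infinity>"
    and z: "z = a + real_of_ereal (r_fn \<phi> K a \<eta>) *\<^sub>R \<eta>"
    unfolding cut_locus_def by blast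
  obtain s where "a \<in> K" and "\<phi> \<eta> = 1" and "0 < s" and "dist_fn \<phi> K (a + s *\<^sub>R \<eta>) = s"
    using nb unfolding normal_bundle_def by auto
  then have "ereal s \<le> r_fn \<phi> K a \<eta>"
    unfolding r_fn_def by (intro Sup_upper) auto
  then obtain R where R: "r_fn \<phi> K a \<eta> = ereal R"
    using \<open>r_fn \<phi> K a \<eta> < \<infinity>\<close> by (cases "r_fn \<phi> K a \<eta>") auto
  have "z = a + R *\<^sub>R \<eta>"
    using z R by simp
  have "0 < R" and "dist_fn \<phi> K z = R"
    using dist_fn_at_r_fn[OF nf \<open>K \<noteq> {}\<close> nb R] \<open>z = a + R *\<^sub>R \<eta>\<close> by simp_all
  have "z \<notin> K"
    using dist_fn_le[OF nf, of z K z] nf \<open>dist_fn \<phi> K z = R\<close> \<open>0 < R\<close> by auto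
  moreover have "\<not> ptwise_twice_diff (dist_fn \<phi> K) z"
  proof
    assume "ptwise_twice_diff (dist_fn \<phi> K) z"
    moreover have "\<phi> (z - a) = dist_fn \<phi> K z"
      using norm_fn_scaleR[OF nf, of R \<eta>] \<open>\<phi> \<eta> = 1\<close> \<open>0 < R\<close> \<open>dist_fn \<phi> K z = R\<close>
      by (simp add: \<open>z = a + R *\<^sub>R \<eta>\<close>)
    moreover have "0 < dist_fn \<phi> K z"
      using \<open>0 < R\<close> \<open>dist_fn \<phi> K z = R\<close> by simp
    ultimately obtain t where "0 < t"
      and "dist_fn \<phi> K (a + (1 + t) *\<^sub>R (z - a)) = (1 + t) * dist_fn \<phi> K z"
      using dist_fn_ray_extends[OF nf cvx \<open>0 < \<gamma>\<close> \<open>K \<noteq> {}\<close> \<open>a \<in> K\<close>] by blast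
    then have "dist_fn \<phi> K (a + ((1 + t) * R) *\<^sub>R \<eta>) = (1 + t) * R"
      using \<open>dist_fn \<phi> K z = R\<close> by (simp add: \<open>z = a + R *\<^sub>R \<eta>\<close>)
    then have "ereal ((1 + t) * R) \<le> r_fn \<phi> K a \<eta>"
      unfolding r_fn_def using \<open>0 < R\<close> \<open>0 < t\<close> by (intro Sup_upper) auto
    then show False
      using R \<open>0 < t\<close> \<open>0 < R\<close> by simp
  qed
  ultimately show "z \<in> Sigma2 \<phi> K"
    unfolding Sigma2_def by simp
qed

theorem lemma4p3:
  fixes \<phi> :: "'a::euclidean_space \<Rightarrow> real" and K :: "'a set"
  assumes "is_norm_fn \<phi>" and "uniformly_convex_norm \<phi>" and "C2_off_origin \<phi>"
    and "closed K" and "K \<noteq> {}"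
  shows "(\<forall>x. x \<notin> K \<and> ptwise_twice_diff (dist_fn \<phi> K) x \<longrightarrow> rho_fn \<phi> K x > 1)
         \<and> cut_locus \<phi> K \<subseteq> Sigma2 \<phi> K"
proof -
  obtain \<gamma> where "0 < \<gamma>" and cvx: "convex_on UNIV (\<lambda>x. \<phi> x - \<gamma> * norm x)"
    using \<open>uniformly_convex_norm \<phi>\<close> unfolding uniformly_convex_norm_def by blast
  show ?thesis
    using rho_fn_gt_one[OF \<open>is_norm_fn \<phi>\<close> cvx \<open>0 < \<gamma>\<close> \<open>closed K\<close> \<open>K \<noteq> {}\<close>]
      cut_locus_subset_Sigma2[OF \<open>is_norm_fn \<phi>\<close> cvx \<open>0 < \<gamma>\<close> \<open>K \<noteq> {}\<close>] by blast
qed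

end
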